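(* Let $n\in\mathbb N$, and let $P(z)=\sum_{j\ge0}p_jz^j$ with $p_j\ge0$ for all $j\ge0$, $P(1)=1$ and $P'(1)\in(0,1)$. Let $r>1$ be such that $r>P(r)$ (in particular $P(r)<\infty$). Let $\xi_j=\exp(2\pi\mathbf i j/n)$, $j=1,\dots,n$, and let $C_{P,r}^{(n)}=(c_{hj})_{h,j=1}^n$ be the $n\times n$ matrix with $c_{hj}=(r\xi_h-P(r\xi_j))^{-1}$. Then for all $k=1,\dots,n-1$, $$\sigma_{k+1}\big(C_{P,r}^{(n)}\big)\le\frac{\theta^k\,n}{(1-\theta)(r-p_0)},\qquad\text{where }\theta:=\frac{P(r)-p_0}{r-p_0}\in(0,1),$$ and $\sigma_1\ge\sigma_2\ge\dots$ denote the singular values. *)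

theory Defs
  imports "HOL-Computational_Algebra.Polynomial" "Jordan_Normal_Form.Schur_Decomposition"
    "Jordan_Normal_Form.Char_Poly" Complex_Main
begin

definition pser :: "(nat \<Rightarrow> real) \<Rightarrow> complex \<Rightarrow> complex" where
  "pser p z = (\<Sum>j. complex_of_real (p j) * z ^ j)"

definition singular_values :: "complex mat \<Rightarrow> real list" where
  "singular_values A =
     rev (sorted_list_of_multiset
       (image_mset (\<lambda>z. sqrt (Re z)) (proots (char_poly (mat_adjoint A * A)))))"

definition sigma :: "complex mat \<Rightarrow> nat \<Rightarrow> real" where
  "sigma A k = singular_values A ! (k - 1)"

definition xi :: "nat \<Rightarrow> nat \<Rightarrow> complex" where
  "xi n j = exp (2 * complex_of_real pi * \<i> * of_nat j / of_nat n)"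

text \<open>The matrix C_{P,r}^{(n)}; row/column index h,j in {1..n} is stored at h-1, j-1.\<close>
definition CPr :: "(nat \<Rightarrow> real) \<Rightarrow> real \<Rightarrow> nat \<Rightarrow> complex mat" where
  "CPr p r n = mat n n (\<lambda>(h, j).
      inverse (complex_of_real r * xi n (h + 1) - pser p (complex_of_real r * xi n (j + 1))))"

end

(*
  Write a_h = r xi_h - p_0 and b_j = P(r xi_j) - p_0, so that the (h, j) entry of C is
  1 / (a_h - b_j).  Since |a_h| >= r - p_0 and |b_j| <= P(r) - p_0 = theta (r - p_0),
  truncating the geometric expansion of 1 / (a_h - b_j) in powers of b_j / a_h after k terms
  gives a matrix of rank at most k that is entrywise within
  eps = theta^k / ((1 - theta) (r - p_0)) of C.

  An entrywise eps-perturbation of a rank-k matrix has sigma_(k+1) <= n eps: otherwise the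
  span of k + 1 orthogonal eigenvectors of C^* C for its largest eigenvalues (obtained by
  Gram-Schmidt from a Schur triangularisation of the Hermitian matrix C^* C) contains a
  nonzero x annihilated by the rank-k part, and then n eps |x| < |C x| <= n eps |x|.
*)
theory Submission
  imports Defs "HOL-Analysis.Convex"
begin

text \<open>Vectors of \<open>\<complex>\<^sup>n\<close> are functions \<open>nat \<Rightarrow> complex\<close> of which only the first
  \<open>n\<close> values matter.\<close>

definition cinner :: "nat \<Rightarrow> (nat \<Rightarrow> complex) \<Rightarrow> (nat \<Rightarrow> complex) \<Rightarrow> complex" where
  "cinner n x y = (\<Sum>i<n. cnj (x i) * y i)"

definition mat_apply :: "nat \<Rightarrow> complex mat \<Rightarrow> (nat \<Rightarrow> complex) \<Rightarrow> nat \<Rightarrow> complex" where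
  "mat_apply n A x = (\<lambda>i. \<Sum>l<n. A $$ (i, l) * x l)"

lemma cinner_self: "cinner n x x = of_real (\<Sum>i<n. (cmod (x i))\<^sup>2)"
  unfolding cinner_def of_real_sum by (intro sum.cong refl) (metis complex_norm_square mult.commute)

lemma cinner_self_eq_0D:
  assumes "cinner n x x = 0" and "i < n"
  shows "x i = 0"
proof -
  have "(\<Sum>i<n. (cmod (x i))\<^sup>2) = 0"
    using assms(1) unfolding cinner_self of_real_eq_0_iff .
  then show ?thesis
    using assms(2) by (simp add: sum_nonneg_eq_0_iff)
qed

lemma cinner_commute: "cinner n y x = cnj (cinner n x y)"
  unfolding cinner_def by (simp add: mult.commute)

lemma cinner_cong:
  "(\<And>h. h < n \<Longrightarrow> x h = x' h) \<Longrightarrow> (\<And>h. h < n \<Longrightarrow> y h = y' h) \<Longrightarrow> cinner n x y = cinner n x' y'"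
  unfolding cinner_def by (intro sum.cong) auto

lemma cinner_diff_right: "cinner n z (\<lambda>h. x h - y h) = cinner n z x - cinner n z y"
  unfolding cinner_def by (simp add: right_diff_distrib sum_subtractf)

lemma cinner_scale_left: "cinner n (\<lambda>h. a * x h) y = cnj a * cinner n x y"
  unfolding cinner_def by (simp add: sum_distrib_left mult.assoc)

lemma cinner_scale_right: "cinner n x (\<lambda>h. a * y h) = a * cinner n x y"
  unfolding cinner_def by (simp add: sum_distrib_left mult.left_commute)

lemma cinner_sum_left: "cinner n (\<lambda>h. \<Sum>i\<in>S. f i h) y = (\<Sum>i\<in>S. cinner n (f i) y)"
  unfolding cinner_def by (simp add: sum_distrib_right sum.swap[of _ S])

lemma cinner_sum_right: "cinner n x (\<lambda>h. \<Sum>i\<in>S. f i h) = (\<Sum>i\<in>S. cinner n x (f i))"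
  unfolding cinner_def by (simp add: sum_distrib_left sum.swap[of _ S])

lemma mat_apply_diff: "mat_apply n A (\<lambda>h. x h - y h) i = mat_apply n A x i - mat_apply n A y i"
  unfolding mat_apply_def by (simp add: right_diff_distrib sum_subtractf)

lemma mat_apply_sum:
  "mat_apply n A (\<lambda>h. \<Sum>t\<in>S. v t * f t h) i = (\<Sum>t\<in>S. v t * mat_apply n A (f t) i)"
  unfolding mat_apply_def sum_distrib_left by (subst sum.swap) (simp add: mult.left_commute)

lemma mat_apply_cong: "(\<And>h. h < n \<Longrightarrow> x h = y h) \<Longrightarrow> mat_apply n A x i = mat_apply n A y i"
  unfolding mat_apply_def by (intro sum.cong) auto

lemma cinner_mat_apply_hermitian:
  assumes herm: "\<And>i l. i < n \<Longrightarrow> l < n \<Longrightarrow> M $$ (i, l) = cnj (M $$ (l, i))"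
  shows "cinner n x (mat_apply n M y) = cinner n (mat_apply n M x) y"
proof -
  have cnj_M: "cnj (M $$ (l, i)) = M $$ (i, l)" if "i < n" "l < n" for i l
    using herm[OF that] by simp
  have "cinner n x (mat_apply n M y) = (\<Sum>i<n. \<Sum>l<n. cnj (x i) * M $$ (i, l) * y l)"
    unfolding cinner_def mat_apply_def by (simp add: sum_distrib_left mult.assoc)
  also have "\<dots> = (\<Sum>l<n. \<Sum>i<n. cnj (M $$ (l, i) * x i) * y l)"
    by (subst sum.swap) (intro sum.cong refl, simp add: cnj_M mult.commute)
  also have "\<dots> = cinner n (mat_apply n M x) y"
    unfolding cinner_def mat_apply_def by (simp add: sum_distrib_right)
  finally show ?thesis .
qed

definition in_span :: "nat \<Rightarrow> (nat \<Rightarrow> nat \<Rightarrow> complex) \<Rightarrow> nat \<Rightarrow> (nat \<Rightarrow> complex) \<Rightarrow> bool" where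
  "in_span n p j x \<longleftrightarrow> (\<exists>c. \<forall>h<n. x h = (\<Sum>l<j. c l * p l h))"

lemma in_span_base:
  assumes "l < j"
  shows "in_span n p j (p l)"
proof -
  have "(\<Sum>i<j. (if i = l then 1 else 0) * p i h) = p l h" for h
    using assms by (simp add: if_distrib[of "\<lambda>c. c * _"] cong: if_cong)
  then show ?thesis
    unfolding in_span_def by metis
qed

lemma in_span_add:
  assumes "in_span n p j x" and "in_span n p j y"
  shows "in_span n p j (\<lambda>h. x h + y h)"
proof -
  obtain c d where "\<forall>h<n. x h = (\<Sum>l<j. c l * p l h)" and "\<forall>h<n. y h = (\<Sum>l<j. d l * p l h)"
    using assms unfolding in_span_def by blast
  then show ?thesis
    unfolding in_span_def by (intro exI[of _ "\<lambda>l. c l + d l"]) (simp add: distrib_right sum.distrib)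
qed

lemma in_span_diff:
  assumes "in_span n p j x" and "in_span n p j y"
  shows "in_span n p j (\<lambda>h. x h - y h)"
proof -
  obtain c d where "\<forall>h<n. x h = (\<Sum>l<j. c l * p l h)" and "\<forall>h<n. y h = (\<Sum>l<j. d l * p l h)"
    using assms unfolding in_span_def by blast
  then show ?thesis
    unfolding in_span_def by (intro exI[of _ "\<lambda>l. c l - d l"]) (simp add: left_diff_distrib sum_subtractf)
qed

lemma in_span_scale:
  assumes "in_span n p j x"
  shows "in_span n p j (\<lambda>h. a * x h)"
proof -
  obtain c where "\<forall>h<n. x h = (\<Sum>l<j. c l * p l h)"
    using assms unfolding in_span_def by blast
  then show ?thesis
    unfolding in_span_def by (intro exI[of _ "\<lambda>l. a * c l"]) (simp add: sum_distrib_left mult.assoc)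
qed

lemma in_span_mono:
  assumes "j \<le> j'" and "in_span n p j x"
  shows "in_span n p j' x"
proof -
  obtain c where c: "\<And>h. h < n \<Longrightarrow> x h = (\<Sum>l<j. c l * p l h)"
    using assms(2) unfolding in_span_def by blast
  have "(\<Sum>l<j'. (if l < j then c l else 0) * p l h) = (\<Sum>l<j. c l * p l h)" for h
    by (rule sum.mono_neutral_cong_right) (use assms(1) in auto)
  then show ?thesis
    unfolding in_span_def using c by metis
qed

lemma in_span_sum:
  assumes "\<And>l. l < m \<Longrightarrow> in_span n q j (f l)"
  shows "in_span n q j (\<lambda>h. \<Sum>l<m. c l * f l h)"
proof -
  have "\<forall>l\<in>{..<m}. \<exists>c. \<forall>h<n. f l h = (\<Sum>i<j. c i * q i h)"
    using assms unfolding in_span_def by blast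
  then obtain d where d: "\<forall>l\<in>{..<m}. \<forall>h<n. f l h = (\<Sum>i<j. d l i * q i h)"
    by (rule bchoice[elim_format]) blast
  have "(\<Sum>l<m. c l * f l h) = (\<Sum>i<j. (\<Sum>l<m. c l * d l i) * q i h)" if "h < n" for h
  proof -
    have "(\<Sum>l<m. c l * f l h) = (\<Sum>l<m. c l * (\<Sum>i<j. d l i * q i h))"
      using d that by simp
    also have "\<dots> = (\<Sum>i<j. \<Sum>l<m. c l * d l i * q i h)"
      by (subst sum.swap) (simp only: sum_distrib_left mult.assoc)
    finally show ?thesis
      by (simp only: sum_distrib_right)
  qed
  then show ?thesis
    unfolding in_span_def by (intro exI[of _ "\<lambda>i. \<Sum>l<m. c l * d l i"]) simp
qed

lemma in_span_trans:
  assumes "\<And>l. l < j \<Longrightarrow> in_span n q j' (p l)" and "in_span n p j x"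
  shows "in_span n q j' x"
proof -
  obtain c where c: "\<And>h. h < n \<Longrightarrow> x h = (\<Sum>l<j. c l * p l h)"
    using assms(2) unfolding in_span_def by blast
  have "in_span n q j' (\<lambda>h. \<Sum>l<j. c l * p l h)"
    using assms(1) by (rule in_span_sum)
  then show ?thesis
    unfolding in_span_def by (simp add: c)
qed

lemma in_span_mat_apply:
  assumes "\<And>l. l < j \<Longrightarrow> in_span n p j (mat_apply n M (p l))" and "in_span n p j x"
  shows "in_span n p j (mat_apply n M x)"
proof -
  obtain c where c: "\<And>h. h < n \<Longrightarrow> x h = (\<Sum>l<j. c l * p l h)"
    using assms(2) unfolding in_span_def by blast
  have "mat_apply n M x = (\<lambda>i. \<Sum>l<j. c l * mat_apply n M (p l) i)"
    by (simp add: fun_eq_iff mat_apply_cong[of n x, OF c] mat_apply_sum)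
  moreover have "in_span n p j (\<lambda>i. \<Sum>l<j. c l * mat_apply n M (p l) i)"
    using assms(1) by (rule in_span_sum)
  ultimately show ?thesis
    by simp
qed

lemma cinner_self_eq_0_if_orthogonal_span:
  assumes "\<And>i. i < j \<Longrightarrow> cinner n (q i) r = 0" and "in_span n q j r"
  shows "cinner n r r = 0"
proof -
  obtain c where c: "\<And>h. h < n \<Longrightarrow> r h = (\<Sum>l<j. c l * q l h)"
    using assms(2) unfolding in_span_def by blast
  have "cinner n r r = cinner n (\<lambda>h. \<Sum>l<j. c l * q l h) r"
    by (rule cinner_cong) (simp_all add: c)
  also have "\<dots> = 0"
    by (simp add: cinner_sum_left cinner_scale_left assms(1))
  finally show ?thesis .
qed

definition proj_coeff :: "nat \<Rightarrow> (nat \<Rightarrow> complex) \<Rightarrow> (nat \<Rightarrow> complex) \<Rightarrow> complex" where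
  "proj_coeff n u x = cinner n u x / cinner n u u"

function gram_schmidt_fun :: "nat \<Rightarrow> (nat \<Rightarrow> nat \<Rightarrow> complex) \<Rightarrow> nat \<Rightarrow> nat \<Rightarrow> complex" where
  "gram_schmidt_fun n p j = (\<lambda>h. p j h
      - (\<Sum>l<j. proj_coeff n (gram_schmidt_fun n p l) (p j) * gram_schmidt_fun n p l h))"
  by auto
termination by (relation "measure (\<lambda>(n, p, j). j)") auto

declare gram_schmidt_fun.simps [simp del]

lemma gram_schmidt_fun_complement:
  "p j h - gram_schmidt_fun n p j h
    = (\<Sum>l<j. proj_coeff n (gram_schmidt_fun n p l) (p j) * gram_schmidt_fun n p l h)"
  by (subst gram_schmidt_fun.simps) simp

lemma gram_schmidt_fun_complement_in_span:
  "in_span n p j (\<lambda>h. p j h - gram_schmidt_fun n p j h)"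
proof (induction j rule: less_induct)
  case (less j)
  have "in_span n p j (gram_schmidt_fun n p l)" if "l < j" for l
  proof -
    have "in_span n p j (\<lambda>h. p l h - gram_schmidt_fun n p l h)"
      by (rule in_span_mono[of l]) (use that less in auto)
    with in_span_base[OF that]
    have "in_span n p j (\<lambda>h. p l h - (p l h - gram_schmidt_fun n p l h))"
      by (rule in_span_diff)
    then show ?thesis
      by simp
  qed
  then show ?case
    unfolding gram_schmidt_fun_complement by (rule in_span_sum)
qed

lemma in_span_gram_schmidt_fun:
  assumes "l < j"
  shows "in_span n (gram_schmidt_fun n p) j (p l)"
proof -
  have "in_span n (gram_schmidt_fun n p) j (\<lambda>h. p l h - gram_schmidt_fun n p l h)"
    unfolding gram_schmidt_fun_complement using assms by (intro in_span_sum in_span_base) simp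
  with in_span_base[OF assms]
  have "in_span n (gram_schmidt_fun n p) j
      (\<lambda>h. gram_schmidt_fun n p l h + (p l h - gram_schmidt_fun n p l h))"
    by (rule in_span_add)
  then show ?thesis
    by simp
qed

definition lin_indep_on :: "nat \<Rightarrow> (nat \<Rightarrow> nat \<Rightarrow> complex) \<Rightarrow> nat \<Rightarrow> bool" where
  "lin_indep_on n p m \<longleftrightarrow> (\<forall>c. (\<forall>h<n. (\<Sum>l<m. c l * p l h) = 0) \<longrightarrow> (\<forall>l<m. c l = 0))"

lemma gram_schmidt_fun_nonzero:
  assumes indep: "lin_indep_on n p m" and "j < m"
  shows "cinner n (gram_schmidt_fun n p j) (gram_schmidt_fun n p j) \<noteq> 0"
proof
  assume "cinner n (gram_schmidt_fun n p j) (gram_schmidt_fun n p j) = 0"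
  then have zero: "gram_schmidt_fun n p j h = 0" if "h < n" for h
    using that by (rule cinner_self_eq_0D)
  obtain c where c: "\<And>h. h < n \<Longrightarrow> p j h - gram_schmidt_fun n p j h = (\<Sum>l<j. c l * p l h)"
    using gram_schmidt_fun_complement_in_span unfolding in_span_def by blast
  define d where "d l = (if l = j then 1 else if l < j then - c l else 0)" for l
  have "(\<Sum>l<m. d l * p l h) = (\<Sum>l<Suc j. d l * p l h)" for h
    using \<open>j < m\<close> by (intro sum.mono_neutral_right) (auto simp: d_def)
  also have "\<dots> h = p j h - (\<Sum>l<j. c l * p l h)" for h
    by (simp add: d_def sum_negf)
  finally have "\<forall>h<n. (\<Sum>l<m. d l * p l h) = 0"
    using c zero by simp
  then have "d j = 0"
    using indep \<open>j < m\<close> unfolding lin_indep_on_def by blast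
  then show False
    by (simp add: d_def)
qed

lemma gram_schmidt_fun_orthogonal:
  assumes indep: "lin_indep_on n p m" and "j < m" and "i < j"
  shows "cinner n (gram_schmidt_fun n p i) (gram_schmidt_fun n p j) = 0"
  using assms(2,3)
proof (induction j arbitrary: i rule: less_induct)
  case (less j)
  let ?q = "gram_schmidt_fun n p"
  have orth: "cinner n (?q i) (?q l) = 0" if "l < j" "l \<noteq> i" for l
  proof (cases "i < l")
    case True
    then show ?thesis
      using less that by simp
  next
    case False
    then have "cinner n (?q l) (?q i) = 0"
      using less that by simp
    then show ?thesis
      by (subst cinner_commute) simp
  qed
  have "cinner n (?q i) (?q j)
      = cinner n (?q i) (p j) - (\<Sum>l<j. proj_coeff n (?q l) (p j) * cinner n (?q i) (?q l))"
    by (subst (2) gram_schmidt_fun.simps) (simp add: cinner_diff_right cinner_sum_right cinner_scale_right)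
  also have "(\<Sum>l<j. proj_coeff n (?q l) (p j) * cinner n (?q i) (?q l))
      = proj_coeff n (?q i) (p j) * cinner n (?q i) (?q i)"
    using \<open>i < j\<close> by (subst sum.remove[of _ i]) (auto simp: orth intro!: sum.neutral)
  also have "\<dots> = cinner n (?q i) (p j)"
    using gram_schmidt_fun_nonzero[OF indep, of i] less by (simp add: proj_coeff_def)
  finally show ?case
    by simp
qed

lemma in_span_image_of_triangular:
  assumes triangular: "\<And>j. j < m \<Longrightarrow> in_span n p j (\<lambda>h. mat_apply n M (p j) h - e j * p j h)"
    and "l < j" and "j \<le> m"
  shows "in_span n p j (mat_apply n M (p l))"
proof -
  have "in_span n p (Suc l) (\<lambda>h. mat_apply n M (p l) h - e l * p l h)"
    by (rule in_span_mono[of l]) (use assms in auto)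
  moreover have "in_span n p (Suc l) (\<lambda>h. e l * p l h)"
    by (intro in_span_scale in_span_base) simp
  ultimately have "in_span n p (Suc l) (\<lambda>h. (mat_apply n M (p l) h - e l * p l h) + e l * p l h)"
    by (rule in_span_add)
  then have "in_span n p (Suc l) (mat_apply n M (p l))"
    by simp
  then show ?thesis
    by (rule in_span_mono[rotated]) (use \<open>l < j\<close> in simp)
qed

lemma gram_schmidt_fun_residual_in_span:
  assumes triangular: "\<And>j. j < m \<Longrightarrow> in_span n p j (\<lambda>h. mat_apply n M (p j) h - e j * p j h)"
    and "j < m"
  shows "in_span n (gram_schmidt_fun n p) j
    (\<lambda>h. mat_apply n M (gram_schmidt_fun n p j) h - e j * gram_schmidt_fun n p j h)"
proof -
  let ?q = "gram_schmidt_fun n p"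
  have complement: "in_span n p j (\<lambda>h. p j h - ?q j h)"
    by (rule gram_schmidt_fun_complement_in_span)
  have "in_span n p j (\<lambda>h. mat_apply n M (p j) h - e j * p j h)"
    using \<open>j < m\<close> by (rule triangular)
  moreover have "in_span n p j (mat_apply n M (\<lambda>h. p j h - ?q j h))"
    using in_span_image_of_triangular[OF triangular _ less_imp_le[OF \<open>j < m\<close>]] complement
    by (rule in_span_mat_apply)
  ultimately have "in_span n p j (\<lambda>h. (mat_apply n M (p j) h - e j * p j h)
      - mat_apply n M (\<lambda>h. p j h - ?q j h) h + e j * (p j h - ?q j h))"
    using complement by (intro in_span_add in_span_scale) (rule in_span_diff)
  moreover have "(mat_apply n M (p j) h - e j * p j h) - mat_apply n M (\<lambda>h. p j h - ?q j h) h
      + e j * (p j h - ?q j h) = mat_apply n M (?q j) h - e j * ?q j h" for h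
    unfolding mat_apply_diff by (simp add: right_diff_distrib)
  ultimately have "in_span n p j (\<lambda>h. mat_apply n M (?q j) h - e j * ?q j h)"
    by simp
  then show ?thesis
    by (intro in_span_trans[OF in_span_gram_schmidt_fun])
qed

lemma gram_schmidt_fun_eigenvector:
  assumes herm: "\<And>i l. i < n \<Longrightarrow> l < n \<Longrightarrow> M $$ (i, l) = cnj (M $$ (l, i))"
    and triangular: "\<And>j. j < m \<Longrightarrow> in_span n p j (\<lambda>h. mat_apply n M (p j) h - e j * p j h)"
    and indep: "lin_indep_on n p m" and "j < m" and "h < n"
  shows "mat_apply n M (gram_schmidt_fun n p j) h = e j * gram_schmidt_fun n p j h"
  using assms(4,5)
proof (induction j arbitrary: h rule: less_induct)
  case (less j)
  let ?q = "gram_schmidt_fun n p"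
  define r where "r h = mat_apply n M (?q j) h - e j * ?q j h" for h
  have "cinner n (?q i) r = 0" if "i < j" for i
  proof -
    have "cinner n (?q i) (mat_apply n M (?q j)) = cinner n (mat_apply n M (?q i)) (?q j)"
      using herm by (rule cinner_mat_apply_hermitian)
    also have "\<dots> = cinner n (\<lambda>h. e i * ?q i h) (?q j)"
      using less that by (intro cinner_cong) auto
    finally show ?thesis
      using gram_schmidt_fun_orthogonal[OF indep \<open>j < m\<close> that]
      unfolding r_def by (simp add: cinner_diff_right cinner_scale_left cinner_scale_right)
  qed
  moreover have "in_span n ?q j r"
    unfolding r_def using triangular \<open>j < m\<close> by (rule gram_schmidt_fun_residual_in_span)
  ultimately have "cinner n r r = 0"
    by (rule cinner_self_eq_0_if_orthogonal_span)
  then show ?case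
    using cinner_self_eq_0D[of n r h] less unfolding r_def by simp
qed

lemma index_mult_mat_sum:
  assumes "A \<in> carrier_mat n m" and "B \<in> carrier_mat m k" and "i < n" and "j < k"
  shows "(A * B) $$ (i, j) = (\<Sum>l<m. A $$ (i, l) * B $$ (l, j))"
  using assms by (simp add: scalar_prod_def atLeast0LessThan)

lemma lin_indep_on_cols_of_left_inverse:
  fixes P Q :: "complex mat"
  assumes P: "P \<in> carrier_mat n n" and Q: "Q \<in> carrier_mat n n" and QP: "Q * P = 1\<^sub>m n"
  shows "lin_indep_on n (\<lambda>l h. P $$ (h, l)) n"
  unfolding lin_indep_on_def
proof (intro allI impI)
  fix c l
  assume zero: "\<forall>h<n. (\<Sum>i<n. c i * P $$ (h, i)) = 0" and "l < n"
  have "c l = (\<Sum>i<n. (Q * P) $$ (l, i) * c i)"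
    using QP \<open>l < n\<close> by (simp add: if_distrib[of "\<lambda>x. x * _"] cong: if_cong)
  also have "\<dots> = (\<Sum>i<n. \<Sum>h<n. Q $$ (l, h) * (c i * P $$ (h, i)))"
    using \<open>l < n\<close> Q P
    by (intro sum.cong refl) (simp add: index_mult_mat_sum sum_distrib_left mult_ac del: index_mult_mat)
  also have "\<dots> = (\<Sum>h<n. Q $$ (l, h) * (\<Sum>i<n. c i * P $$ (h, i)))"
    by (subst sum.swap) (simp only: sum_distrib_left)
  also have "\<dots> = 0"
    using zero by simp
  finally show "c l = 0" .
qed

lemma triangularising_basis:
  fixes M :: "complex mat"
  assumes M: "M \<in> carrier_mat n n" and char_poly: "char_poly M = (\<Prod>e\<leftarrow>es. [:- e, 1:])"
  obtains p where "lin_indep_on n p n"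
    and "\<And>j. j < n \<Longrightarrow> in_span n p j (\<lambda>h. mat_apply n M (p j) h - es ! j * p j h)"
proof -
  obtain T P Q where schur: "schur_decomposition M es = (T, P, Q)"
    by (cases "schur_decomposition M es") auto
  from schur_decomposition[OF M char_poly schur]
  have sim: "similar_mat_wit M T P Q" and upper: "upper_triangular T" and diag: "diag_mat T = es"
    by auto
  from similar_mat_witD2[OF M sim]
  have T: "T \<in> carrier_mat n n" and P: "P \<in> carrier_mat n n" and Q: "Q \<in> carrier_mat n n"
    and QP: "Q * P = 1\<^sub>m n" and MPTQ: "M = P * T * Q"
    by auto
  have MP: "M * P = P * T"
    using MPTQ P T Q QP by (simp add: assoc_mult_mat[of _ n n _ n _ n])
  define p where "p l h = P $$ (h, l)" for l h
  have "in_span n p j (\<lambda>h. mat_apply n M (p j) h - es ! j * p j h)" if "j < n" for j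
  proof -
    have "mat_apply n M (p j) h - es ! j * p j h = (\<Sum>l<j. T $$ (l, j) * p l h)" if "h < n" for h
    proof -
      have "mat_apply n M (p j) h = (P * T) $$ (h, j)"
        unfolding mat_apply_def p_def MP[symmetric]
        by (simp add: index_mult_mat_sum[OF M P \<open>h < n\<close> \<open>j < n\<close>] del: index_mult_mat)
      also have "\<dots> = (\<Sum>l<Suc j. P $$ (h, l) * T $$ (l, j))"
        using P T upper \<open>h < n\<close> \<open>j < n\<close> unfolding index_mult_mat_sum[OF P T \<open>h < n\<close> \<open>j < n\<close>]
        by (intro sum.mono_neutral_right) (auto simp: upper_triangular_def)
      moreover have "es ! j = T $$ (j, j)"
        using diag T \<open>j < n\<close> by (auto simp: diag_mat_def)
      ultimately show ?thesis
        by (simp add: p_def mult.commute)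
    qed
    then show ?thesis
      unfolding in_span_def by (intro exI[of _ "\<lambda>l. T $$ (l, j)"]) simp
  qed
  moreover have "lin_indep_on n p n"
    unfolding p_def using P Q QP by (rule lin_indep_on_cols_of_left_inverse)
  ultimately show thesis
    using that by blast
qed

lemma hermitian_orthogonal_eigenbasis:
  fixes M :: "complex mat"
  assumes M: "M \<in> carrier_mat n n"
    and herm: "\<And>i l. i < n \<Longrightarrow> l < n \<Longrightarrow> M $$ (i, l) = cnj (M $$ (l, i))"
    and char_poly: "char_poly M = (\<Prod>e\<leftarrow>es. [:- e, 1:])"
  obtains q where "\<And>j. j < n \<Longrightarrow> cinner n (q j) (q j) \<noteq> 0"
    and "\<And>i j. i < j \<Longrightarrow> j < n \<Longrightarrow> cinner n (q i) (q j) = 0"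
    and "\<And>j h. j < n \<Longrightarrow> h < n \<Longrightarrow> mat_apply n M (q j) h = es ! j * q j h"
proof -
  obtain p where indep: "lin_indep_on n p n"
    and triangular: "\<And>j. j < n \<Longrightarrow> in_span n p j (\<lambda>h. mat_apply n M (p j) h - es ! j * p j h)"
    using triangularising_basis[OF M char_poly] by blast
  show thesis
  proof (rule that[of "gram_schmidt_fun n p"])
    show "cinner n (gram_schmidt_fun n p j) (gram_schmidt_fun n p j) \<noteq> 0" if "j < n" for j
      using indep that by (rule gram_schmidt_fun_nonzero)
    show "cinner n (gram_schmidt_fun n p i) (gram_schmidt_fun n p j) = 0" if "i < j" "j < n" for i j
      using indep that(2,1) by (rule gram_schmidt_fun_orthogonal)
    show "mat_apply n M (gram_schmidt_fun n p j) h = es ! j * gram_schmidt_fun n p j h"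
      if "j < n" "h < n" for j h
      using herm triangular indep that by (rule gram_schmidt_fun_eigenvector)
  qed
qed

lemma cinner_orthogonal_sum:
  fixes q :: "nat \<Rightarrow> nat \<Rightarrow> complex"
  assumes orth: "\<And>s t. s < t \<Longrightarrow> t < m \<Longrightarrow> cinner n (q s) (q t) = 0"
  shows "cinner n (\<lambda>h. \<Sum>t<m. v t * q t h) (\<lambda>h. \<Sum>t<m. w t * q t h)
    = (\<Sum>t<m. cnj (v t) * w t * cinner n (q t) (q t))"
proof -
  have orth': "cinner n (q s) (q t) = 0" if "s < m" "t < m" "s \<noteq> t" for s t
  proof (cases "s < t")
    case False
    then have "cinner n (q t) (q s) = 0"
      using that by (intro orth) auto
    then show ?thesis
      by (subst cinner_commute) simp
  qed (use orth that in simp)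
  have "cinner n (\<lambda>h. \<Sum>t<m. v t * q t h) (\<lambda>h. \<Sum>t<m. w t * q t h)
      = (\<Sum>s<m. \<Sum>t<m. cnj (v s) * w t * cinner n (q s) (q t))"
    by (simp add: cinner_sum_left cinner_sum_right cinner_scale_left cinner_scale_right
        sum_distrib_left mult.assoc)
  also have "\<dots> = (\<Sum>s<m. cnj (v s) * w s * cinner n (q s) (q s))"
  proof (rule sum.cong[OF refl])
    fix s
    assume "s \<in> {..<m}"
    then show "(\<Sum>t<m. cnj (v s) * w t * cinner n (q s) (q t)) = cnj (v s) * w s * cinner n (q s) (q s)"
      by (subst sum.remove[of _ s]) (auto simp: orth' intro!: sum.neutral)
  qed
  finally show ?thesis .
qed

lemma cinner_eigen_combination:
  fixes q :: "nat \<Rightarrow> nat \<Rightarrow> complex"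
  assumes orth: "\<And>s t. s < t \<Longrightarrow> t < m \<Longrightarrow> cinner n (q s) (q t) = 0"
    and eigen: "\<And>t h. t < m \<Longrightarrow> h < n \<Longrightarrow> mat_apply n M (q t) h = e t * q t h"
  shows "cinner n (\<lambda>h. \<Sum>t<m. v t * q t h) (mat_apply n M (\<lambda>h. \<Sum>t<m. v t * q t h))
    = (\<Sum>t<m. cnj (v t) * v t * e t * cinner n (q t) (q t))"
proof -
  have "cinner n (\<lambda>h. \<Sum>t<m. v t * q t h) (mat_apply n M (\<lambda>h. \<Sum>t<m. v t * q t h))
      = cinner n (\<lambda>h. \<Sum>t<m. v t * q t h) (\<lambda>h. \<Sum>t<m. (v t * e t) * q t h)"
    by (intro cinner_cong) (simp_all add: mat_apply_sum eigen mult.assoc)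
  also have "\<dots> = (\<Sum>t<m. cnj (v t) * (v t * e t) * cinner n (q t) (q t))"
    by (rule cinner_orthogonal_sum[OF orth])
  finally show ?thesis
    by (simp only: mult.assoc)
qed

lemma Rayleigh_quotient_gt:
  fixes q :: "nat \<Rightarrow> nat \<Rightarrow> complex"
  assumes nonzero: "\<And>t. t < m \<Longrightarrow> cinner n (q t) (q t) \<noteq> 0"
    and orth: "\<And>s t. s < t \<Longrightarrow> t < m \<Longrightarrow> cinner n (q s) (q t) = 0"
    and eigen: "\<And>t h. t < m \<Longrightarrow> h < n \<Longrightarrow> mat_apply n M (q t) h = e t * q t h"
    and large: "\<And>t. t < m \<Longrightarrow> c < Re (e t)"
    and "t0 < m" and "v t0 \<noteq> 0"
  defines "x \<equiv> \<lambda>h. \<Sum>t<m. v t * q t h"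
  shows "c * Re (cinner n x x) < Re (cinner n x (mat_apply n M x))"
proof -
  define N where "N t = (\<Sum>h<n. (cmod (q t h))\<^sup>2)" for t
  have N: "cinner n (q t) (q t) = of_real (N t)" for t
    unfolding N_def by (rule cinner_self)
  have N_pos: "0 < N t" if "t < m" for t
  proof -
    have "N t \<noteq> 0"
      using nonzero[OF that] N[of t] by auto
    moreover have "0 \<le> N t"
      unfolding N_def by (simp add: sum_nonneg)
    ultimately show ?thesis
      by simp
  qed
  have cnj_mult: "cnj z * z = of_real ((cmod z)\<^sup>2)" for z :: complex
    by (metis complex_norm_square mult.commute)
  have "cinner n x x = (\<Sum>t<m. cnj (v t) * v t * cinner n (q t) (q t))"
    unfolding x_def by (rule cinner_orthogonal_sum[OF orth])
  then have "cinner n x x = (\<Sum>t<m. of_real ((cmod (v t))\<^sup>2 * N t))"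
    by (simp only: cnj_mult N of_real_mult)
  moreover have "cinner n x (mat_apply n M x) = (\<Sum>t<m. cnj (v t) * v t * e t * cinner n (q t) (q t))"
    unfolding x_def by (rule cinner_eigen_combination[OF orth eigen])
  then have "cinner n x (mat_apply n M x) = (\<Sum>t<m. of_real ((cmod (v t))\<^sup>2 * N t) * e t)"
    by (simp only: cnj_mult N) (simp add: mult_ac)
  ultimately have "Re (cinner n x (mat_apply n M x)) - c * Re (cinner n x x)
      = (\<Sum>t<m. (cmod (v t))\<^sup>2 * N t * (Re (e t) - c))"
    by (simp add: sum_distrib_left sum_subtractf algebra_simps)
  also have "\<dots> > 0"
  proof (rule sum_pos2[of _ t0])
    show "0 < (cmod (v t0))\<^sup>2 * N t0 * (Re (e t0) - c)"
      using N_pos large \<open>t0 < m\<close> \<open>v t0 \<noteq> 0\<close> by simp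
    show "0 \<le> (cmod (v t))\<^sup>2 * N t * (Re (e t) - c)" if "t \<in> {..<m}" for t
      using N_pos[of t] large[of t] that by simp
  qed (use \<open>t0 < m\<close> in simp_all)
  finally show ?thesis
    by simp
qed

lemma homogeneous_system_nontrivial_solution:
  fixes a :: "nat \<Rightarrow> nat \<Rightarrow> 'a :: field"
  assumes "k < m"
  obtains v t0 where "t0 < m" and "v t0 \<noteq> 0" and "\<And>i. i < k \<Longrightarrow> (\<Sum>t<m. a i t * v t) = 0"
proof -
  define A where "A = mat\<^sub>r m m (\<lambda>i. if i = m - 1 then 0\<^sub>v m else vec m (a i))"
  have A: "A \<in> carrier_mat m m"
    by (simp add: A_def)
  have "det A = 0"
    unfolding A_def using \<open>k < m\<close> by (intro det_row_0) auto
  then obtain v where v: "v \<in> carrier_vec m" "v \<noteq> 0\<^sub>v m" "A *\<^sub>v v = 0\<^sub>v m"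
    using det_0_iff_vec_prod_zero_field[OF A] by blast
  obtain t0 where "t0 < m" "v $ t0 \<noteq> 0"
    using v(1,2) by (metis carrier_vecD eq_vecI index_zero_vec(1,2))
  moreover have "(\<Sum>t<m. a i t * v $ t) = 0" if "i < k" for i
  proof -
    have "(A *\<^sub>v v) $ i = (\<Sum>t<m. a i t * v $ t)"
      using that \<open>k < m\<close> v(1) by (simp add: A_def scalar_prod_def atLeast0LessThan)
    then show ?thesis
      using v(3) that \<open>k < m\<close> by simp
  qed
  ultimately show thesis
    by (rule that)
qed

lemma index_adjoint_mult_self:
  assumes A: "A \<in> carrier_mat n n" and "i < n" and "l < n"
  shows "(mat_adjoint A * A) $$ (i, l) = (\<Sum>h<n. cnj (A $$ (h, i)) * A $$ (h, l))"
proof -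
  have adj: "mat_adjoint A \<in> carrier_mat n n"
    using A unfolding mat_adjoint_def mat_of_rows_def by simp
  show ?thesis
    using A assms(2,3) unfolding index_mult_mat_sum[OF adj A assms(2,3)]
    by (intro sum.cong refl) (simp add: mat_adjoint_def mat_of_rows_def)
qed

lemma adjoint_mult_self_carrier_mat:
  "A \<in> carrier_mat n n \<Longrightarrow> mat_adjoint A * A \<in> carrier_mat n n"
  unfolding mat_adjoint_def mat_of_rows_def by auto

lemma adjoint_mult_self_hermitian:
  assumes "A \<in> carrier_mat n n" and "i < n" and "l < n"
  shows "(mat_adjoint A * A) $$ (i, l) = cnj ((mat_adjoint A * A) $$ (l, i))"
  using assms by (simp add: index_adjoint_mult_self mult.commute)

lemma cinner_adjoint_mult_self:
  assumes A: "A \<in> carrier_mat n n"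
  shows "cinner n x (mat_apply n (mat_adjoint A * A) x) = cinner n (mat_apply n A x) (mat_apply n A x)"
proof -
  have "mat_apply n (mat_adjoint A * A) x i = (\<Sum>h<n. cnj (A $$ (h, i)) * mat_apply n A x h)"
    if "i < n" for i
  proof -
    have "mat_apply n (mat_adjoint A * A) x i = (\<Sum>l<n. \<Sum>h<n. cnj (A $$ (h, i)) * (A $$ (h, l) * x l))"
      unfolding mat_apply_def using A that
      by (intro sum.cong refl) (simp add: index_adjoint_mult_self sum_distrib_right mult.assoc)
    also have "\<dots> = (\<Sum>h<n. cnj (A $$ (h, i)) * mat_apply n A x h)"
      unfolding mat_apply_def by (subst sum.swap) (simp only: sum_distrib_left)
    finally show ?thesis .
  qed
  then have "cinner n x (mat_apply n (mat_adjoint A * A) x)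
      = (\<Sum>i<n. \<Sum>h<n. cnj (A $$ (h, i) * x i) * mat_apply n A x h)"
    unfolding cinner_def by (simp add: sum_distrib_left mult.assoc mult.left_commute)
  also have "\<dots> = cinner n (mat_apply n A x) (mat_apply n A x)"
    unfolding cinner_def by (subst sum.swap) (simp add: mat_apply_def sum_distrib_right)
  finally show ?thesis .
qed

lemma cinner_self_mat_apply_le_of_entrywise_approx:
  assumes approx: "\<And>h j. h < n \<Longrightarrow> j < n \<Longrightarrow> cmod (A $$ (h, j) - (\<Sum>m<k. U h m * W m j)) \<le> \<epsilon>"
    and kernel: "\<And>m. m < k \<Longrightarrow> (\<Sum>j<n. W m j * x j) = 0"
  shows "Re (cinner n (mat_apply n A x) (mat_apply n A x)) \<le> (real n * \<epsilon>)\<^sup>2 * Re (cinner n x x)"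
proof -
  define S where "S = (\<Sum>j<n. cmod (x j))"
  have residual: "mat_apply n A x h = (\<Sum>j<n. (A $$ (h, j) - (\<Sum>m<k. U h m * W m j)) * x j)" for h
  proof -
    have "(\<Sum>j<n. (\<Sum>m<k. U h m * W m j) * x j) = (\<Sum>m<k. U h m * (\<Sum>j<n. W m j * x j))"
      unfolding sum_distrib_left sum_distrib_right by (subst sum.swap) (simp only: mult.assoc)
    also have "\<dots> = 0"
      by (simp add: kernel)
    finally show ?thesis
      unfolding mat_apply_def by (simp add: left_diff_distrib sum_subtractf)
  qed
  have bound: "cmod (mat_apply n A x h) \<le> \<epsilon> * S" if "h < n" for h
  proof -
    have "cmod (mat_apply n A x h) \<le> (\<Sum>j<n. cmod (A $$ (h, j) - (\<Sum>m<k. U h m * W m j)) * cmod (x j))"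
      unfolding residual by (rule order_trans[OF norm_sum]) (simp add: norm_mult)
    also have "\<dots> \<le> (\<Sum>j<n. \<epsilon> * cmod (x j))"
      using approx that by (intro sum_mono mult_right_mono) simp_all
    finally show ?thesis
      by (simp add: S_def sum_distrib_left)
  qed
  have "Re (cinner n (mat_apply n A x) (mat_apply n A x)) = (\<Sum>h<n. (cmod (mat_apply n A x h))\<^sup>2)"
    by (simp add: cinner_self)
  also have "\<dots> \<le> (\<Sum>h<n. (\<epsilon> * S)\<^sup>2)"
    using bound by (intro sum_mono power_mono) simp_all
  also have "\<dots> = real n * \<epsilon>\<^sup>2 * S\<^sup>2"
    by (simp add: power_mult_distrib)
  also have "\<dots> \<le> real n * \<epsilon>\<^sup>2 * (real n * (\<Sum>j<n. (cmod (x j))\<^sup>2))"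
    using sum_squared_le_sum_of_squares[of "\<lambda>j. cmod (x j)" "{..<n}"]
    by (intro mult_left_mono) (simp_all add: S_def mult.commute)
  also have "\<dots> = (real n * \<epsilon>)\<^sup>2 * Re (cinner n x x)"
    by (simp add: cinner_self power2_eq_square)
  finally show ?thesis .
qed

lemma sorted_length_filter_greater:
  fixes xs :: "'a :: linorder list"
  assumes "sorted xs" and "k < length xs" and "E < rev xs ! k"
  shows "k + 1 \<le> length (filter (\<lambda>y. E < y) xs)"
proof -
  define i where "i = length xs - Suc k"
  have "E < y" if y: "y \<in> set (drop i xs)" for y
  proof -
    obtain j where "j < length (drop i xs)" and "y = drop i xs ! j"
      using y unfolding in_set_conv_nth by blast
    then have "xs ! i \<le> y"
      using assms(1) by (simp add: sorted_nth_mono)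
    moreover have "rev xs ! k = xs ! i"
      using assms(2) by (simp add: rev_nth i_def)
    ultimately show ?thesis
      using assms(3) by simp
  qed
  then have "filter (\<lambda>y. E < y) (drop i xs) = drop i xs"
    by simp
  then have "k + 1 = length (filter (\<lambda>y. E < y) (drop i xs))"
    using assms(2) by (simp add: i_def)
  also have "\<dots> \<le> length (filter (\<lambda>y. E < y) (take i xs @ drop i xs))"
    unfolding filter_append by simp
  finally show ?thesis
    by simp
qed

lemma proots_prod_linear_factors: "proots (\<Prod>a\<leftarrow>as. [:- a, 1:]) = mset (as :: 'a :: idom list)"
proof (induction as)
  case (Cons a as)
  have "[:- b, 1:] \<noteq> 0" for b :: 'a
    by simp
  then have "(\<Prod>a\<leftarrow>as. [:- a, 1:]) \<noteq> 0"
    by (auto simp: prod_list_zero_iff)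
  then have "proots ([:- a, 1:] * (\<Prod>a\<leftarrow>as. [:- a, 1:])) = proots [:- a, 1:] + mset as"
    using Cons.IH by (subst proots_mult) simp_all
  then show ?case
    using proots_linear_factor[of "- a"] by simp
qed simp

lemma sigma_gt_imp_length_filter:
  assumes char_poly: "char_poly (mat_adjoint A * A) = (\<Prod>a\<leftarrow>as. [:- a, 1:])"
    and "k < length as" and "E < sigma A (k + 1)"
  shows "k + 1 \<le> length (filter (\<lambda>z. E < sqrt (Re z)) as)"
proof -
  define sl where "sl = sorted_list_of_multiset (image_mset (\<lambda>z. sqrt (Re z)) (mset as))"
  have mset_sl: "mset sl = image_mset (\<lambda>z. sqrt (Re z)) (mset as)"
    unfolding sl_def by simp
  have "sigma A (k + 1) = rev sl ! k"
    unfolding sigma_def singular_values_def sl_def char_poly proots_prod_linear_factors by simp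
  moreover have "length sl = length as"
    by (metis mset_sl size_image_mset size_mset)
  ultimately have "k + 1 \<le> length (filter (\<lambda>y. E < y) sl)"
    using assms(2,3) by (intro sorted_length_filter_greater) (simp_all add: sl_def)
  also have "length (filter (\<lambda>y. E < y) sl) = size (filter_mset (\<lambda>y. E < y) (mset sl))"
    by (metis mset_filter size_mset)
  also have "\<dots> = size (filter_mset (\<lambda>z. E < sqrt (Re z)) (mset as))"
    by (simp add: mset_sl filter_mset_image_mset)
  also have "\<dots> = length (filter (\<lambda>z. E < sqrt (Re z)) as)"
    by (metis mset_filter size_mset)
  finally show ?thesis .
qed

lemma large_eigenvalues_first:
  fixes A :: "complex mat"
  assumes A: "A \<in> carrier_mat n n" and "k < n" and "0 \<le> E" and "E < sigma A (k + 1)"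
  obtains es where "char_poly (mat_adjoint A * A) = (\<Prod>e\<leftarrow>es. [:- e, 1:])"
    and "\<And>t. t \<le> k \<Longrightarrow> E\<^sup>2 < Re (es ! t)"
proof -
  obtain as where as: "char_poly (mat_adjoint A * A) = (\<Prod>a\<leftarrow>as. [:- a, 1:])" "length as = n"
    using char_poly_factorized[OF adjoint_mult_self_carrier_mat[OF A]] by blast
  define G where "G z \<longleftrightarrow> E < sqrt (Re z)" for z :: complex
  \<comment> \<open>Listing the large roots first makes the Schur basis start with their eigenvectors.\<close>
  define es where "es = filter G as @ filter (\<lambda>z. \<not> G z) as"
  have "mset es = mset as"
    unfolding es_def by (simp flip: multiset_partition)
  then have "(\<Prod>e\<leftarrow>es. [:- e, 1:]) = (\<Prod>a\<leftarrow>as. [:- a, 1:])"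
    by (metis mset_map prod_mset_prod_list)
  moreover have "E\<^sup>2 < Re (es ! t)" if "t \<le> k" for t
  proof -
    have "k + 1 \<le> length (filter G as)"
      unfolding G_def using as assms(2,4) by (intro sigma_gt_imp_length_filter) simp_all
    then have "G (es ! t)"
      using that nth_mem[of t "filter G as"] by (simp add: es_def nth_append)
    then have "E < sqrt (Re (es ! t))"
      unfolding G_def .
    then have "E\<^sup>2 < (sqrt (Re (es ! t)))\<^sup>2"
      using \<open>0 \<le> E\<close> by (intro power_strict_mono) auto
    moreover have "0 < Re (es ! t)"
      using \<open>E < sqrt (Re (es ! t))\<close> \<open>0 \<le> E\<close> by (metis le_less_trans real_sqrt_gt_0_iff)
    ultimately show ?thesis
      by simp
  qed
  ultimately show thesis
    using as(1) by (metis that)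
qed

lemma hermitian_Rayleigh_quotient_gt_on_kernel:
  fixes M :: "complex mat" and W :: "nat \<Rightarrow> nat \<Rightarrow> complex"
  assumes M: "M \<in> carrier_mat n n"
    and herm: "\<And>i l. i < n \<Longrightarrow> l < n \<Longrightarrow> M $$ (i, l) = cnj (M $$ (l, i))"
    and char_poly: "char_poly M = (\<Prod>e\<leftarrow>es. [:- e, 1:])"
    and "k < n" and large: "\<And>t. t \<le> k \<Longrightarrow> c < Re (es ! t)"
  obtains x where "\<And>m. m < k \<Longrightarrow> (\<Sum>j<n. W m j * x j) = 0"
    and "c * Re (cinner n x x) < Re (cinner n x (mat_apply n M x))"
proof -
  obtain q where q_nonzero: "\<And>j. j < n \<Longrightarrow> cinner n (q j) (q j) \<noteq> 0"
    and q_orth: "\<And>i j. i < j \<Longrightarrow> j < n \<Longrightarrow> cinner n (q i) (q j) = 0"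
    and q_eigen: "\<And>j h. j < n \<Longrightarrow> h < n \<Longrightarrow> mat_apply n M (q j) h = es ! j * q j h"
    using hermitian_orthogonal_eigenbasis[OF M herm char_poly] by blast
  have "k < k + 1"
    by simp
  then obtain v t0 where "t0 < k + 1" and "v t0 \<noteq> 0"
    and v: "\<And>m. m < k \<Longrightarrow> (\<Sum>t<k + 1. (\<Sum>j<n. W m j * q t j) * v t) = 0"
    by (rule homogeneous_system_nontrivial_solution[where a = "\<lambda>m t. \<Sum>j<n. W m j * q t j"]) blast
  define x where "x = (\<lambda>j. \<Sum>t<k + 1. v t * q t j)"
  have "(\<Sum>j<n. W m j * x j) = 0" if "m < k" for m
  proof -
    have "(\<Sum>j<n. W m j * x j) = (\<Sum>t<k + 1. (\<Sum>j<n. W m j * q t j) * v t)"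
      unfolding x_def sum_distrib_left sum_distrib_right by (subst sum.swap) (simp only: mult_ac)
    then show ?thesis
      using v[OF that] by simp
  qed
  moreover have "c * Re (cinner n x x) < Re (cinner n x (mat_apply n M x))"
    unfolding x_def
  proof (rule Rayleigh_quotient_gt[where e = "\<lambda>t. es ! t"])
    show "cinner n (q t) (q t) \<noteq> 0" if "t < k + 1" for t
      using that \<open>k < n\<close> by (intro q_nonzero) simp
    show "cinner n (q s) (q t) = 0" if "s < t" "t < k + 1" for s t
      using that \<open>k < n\<close> by (intro q_orth) simp_all
    show "mat_apply n M (q t) h = es ! t * q t h" if "t < k + 1" "h < n" for t h
      using that \<open>k < n\<close> by (intro q_eigen) simp_all
    show "c < Re (es ! t)" if "t < k + 1" for t
      using that by (intro large) simp
  qed fact+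
  ultimately show thesis
    by (rule that)
qed

theorem sigma_le_of_entrywise_low_rank_approx:
  fixes A :: "complex mat" and U W :: "nat \<Rightarrow> nat \<Rightarrow> complex"
  assumes A: "A \<in> carrier_mat n n" and "k < n"
    and approx: "\<And>h j. h < n \<Longrightarrow> j < n \<Longrightarrow> cmod (A $$ (h, j) - (\<Sum>m<k. U h m * W m j)) \<le> \<epsilon>"
  shows "sigma A (k + 1) \<le> real n * \<epsilon>"
proof (rule ccontr)
  define E where "E = real n * \<epsilon>"
  assume "\<not> sigma A (k + 1) \<le> real n * \<epsilon>"
  then have "E < sigma A (k + 1)"
    by (simp add: E_def)
  moreover have "0 \<le> E"
  proof -
    have "cmod (A $$ (0, 0) - (\<Sum>m<k. U 0 m * W m 0)) \<le> \<epsilon>"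
      using \<open>k < n\<close> by (intro approx) simp_all
    then show ?thesis
      unfolding E_def by (intro mult_nonneg_nonneg of_nat_0_le_iff order_trans[OF norm_ge_zero])
  qed
  ultimately obtain es where es: "char_poly (mat_adjoint A * A) = (\<Prod>e\<leftarrow>es. [:- e, 1:])"
    and large: "\<And>t. t \<le> k \<Longrightarrow> E\<^sup>2 < Re (es ! t)"
    using large_eigenvalues_first[OF A \<open>k < n\<close>] by blast
  obtain x where kernel: "\<And>m. m < k \<Longrightarrow> (\<Sum>j<n. W m j * x j) = 0"
    and gt: "E\<^sup>2 * Re (cinner n x x) < Re (cinner n x (mat_apply n (mat_adjoint A * A) x))"
    using hermitian_Rayleigh_quotient_gt_on_kernel[where W = W, OF adjoint_mult_self_carrier_mat[OF A]
        adjoint_mult_self_hermitian[OF A] es \<open>k < n\<close> large] by blast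
  have "Re (cinner n x (mat_apply n (mat_adjoint A * A) x)) \<le> E\<^sup>2 * Re (cinner n x x)"
    unfolding cinner_adjoint_mult_self[OF A] E_def using approx kernel
    by (rule cinner_self_mat_apply_le_of_entrywise_approx)
  with gt show False
    by simp
qed

lemma inverse_diff_eq_geometric_sum:
  fixes a b :: "'a :: field"
  assumes "a \<noteq> 0" and "a \<noteq> b"
  shows "inverse (a - b) = (\<Sum>m<k. inverse (a ^ (m + 1)) * b ^ m) + (b / a) ^ k / (a - b)"
proof (induction k)
  case (Suc k)
  have "(b / a) ^ k / (a - b) = inverse (a ^ (k + 1)) * b ^ k + (b / a) ^ Suc k / (a - b)"
    using assms by (simp add: field_simps power_Suc)
  then show ?case
    using Suc by simp
qed (simp add: divide_inverse)

lemma norm_inverse_diff_minus_geometric_sum_le: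
  fixes a b :: "'a :: real_normed_field"
  assumes ba: "norm b \<le> \<theta> * norm a" and "\<theta> < 1" and "0 < \<rho>" and "\<rho> \<le> norm a"
  shows "norm (inverse (a - b) - (\<Sum>m<k. inverse (a ^ (m + 1)) * b ^ m)) \<le> \<theta> ^ k / ((1 - \<theta>) * \<rho>)"
proof -
  have a_pos: "0 < norm a"
    using assms by linarith
  have "0 \<le> \<theta> * norm a"
    using ba norm_ge_zero order_trans by blast
  then have "0 \<le> \<theta>"
    using a_pos by (simp add: zero_le_mult_iff)
  have gap: "(1 - \<theta>) * \<rho> \<le> norm (a - b)"
  proof -
    have "(1 - \<theta>) * \<rho> \<le> (1 - \<theta>) * norm a"
      using assms by simp
    also have "\<dots> \<le> norm a - norm b"
      using ba by (simp add: algebra_simps)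
    also have "\<dots> \<le> norm (a - b)"
      by (rule norm_triangle_ineq2)
    finally show ?thesis .
  qed
  moreover have gap_pos: "0 < (1 - \<theta>) * \<rho>"
    using assms by simp
  ultimately have "a \<noteq> b"
    by auto
  have "norm (b / a) \<le> \<theta>"
    using ba a_pos by (simp add: norm_divide divide_le_eq mult.commute)
  then have "norm (b / a) ^ k \<le> \<theta> ^ k"
    by (intro power_mono) simp_all
  then have "norm ((b / a) ^ k / (a - b)) \<le> \<theta> ^ k / ((1 - \<theta>) * \<rho>)"
    unfolding norm_divide norm_power using gap gap_pos \<open>0 \<le> \<theta>\<close> by (intro frac_le) simp_all
  then show ?thesis
    using a_pos \<open>a \<noteq> b\<close> by (simp add: inverse_diff_eq_geometric_sum[of a b k])
qed

lemma norm_xi [simp]: "cmod (xi n j) = 1"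
  unfolding xi_def by (simp add: norm_exp_eq_Re)

lemma norm_pser_minus_constant_le:
  assumes nonneg: "\<And>j. 0 \<le> p j" and summable: "summable (\<lambda>j. p j * r ^ j)" and "cmod z = r"
  shows "cmod (pser p z - of_real (p 0)) \<le> (\<Sum>j. p j * r ^ j) - p 0"
proof -
  define g where "g j = complex_of_real (p j) * z ^ j" for j
  have norm_g: "norm (g j) = p j * r ^ j" for j
    unfolding g_def using nonneg[of j] \<open>cmod z = r\<close> by (simp add: norm_mult norm_power)
  have summable_g: "summable (\<lambda>j. norm (g j))"
    unfolding norm_g by (rule summable)
  have "pser p z - of_real (p 0) = (\<Sum>j. g (Suc j))"
    using suminf_split_head[OF summable_norm_cancel[OF summable_g]] unfolding pser_def g_def by simp
  also have "norm \<dots> \<le> (\<Sum>j. norm (g (Suc j)))"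
    using summable_g by (intro summable_norm) (subst summable_Suc_iff)
  also have "\<dots> = (\<Sum>j. p j * r ^ j) - p 0"
    unfolding norm_g using suminf_split_head[OF summable] by simp
  finally show ?thesis .
qed

lemma constant_coeff_less_pser_real:
  fixes p :: "nat \<Rightarrow> real"
  assumes nonneg: "\<And>j. 0 \<le> p j" and summable: "summable (\<lambda>j. p j * r ^ j)" and "0 < r"
    and mean_pos: "0 < (\<Sum>j. real j * p j)"
  shows "p 0 < (\<Sum>j. p j * r ^ j)"
proof -
  have "\<exists>j. 0 < real j * p j"
  proof (rule ccontr)
    assume "\<nexists>j. 0 < real j * p j"
    have "real j * p j = 0" for j
    proof -
      have "0 \<le> real j * p j"
        using nonneg[of j] by simp
      moreover have "\<not> 0 < real j * p j"
        using \<open>\<nexists>j. 0 < real j * p j\<close> by blast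
      ultimately show ?thesis
        by linarith
    qed
    then have "(\<lambda>j. real j * p j) = (\<lambda>_. 0)"
      by (rule ext)
    then show False
      using mean_pos by simp
  qed
  then obtain j where "j \<noteq> 0" and "0 < p j"
    by (auto simp: zero_less_mult_iff)
  have terms_nonneg: "0 \<le> p i * r ^ i" for i
    using nonneg[of i] \<open>0 < r\<close> by simp
  have "p 0 < p 0 + p j * r ^ j"
    using \<open>0 < p j\<close> \<open>0 < r\<close> by simp
  also have "\<dots> = (\<Sum>i\<in>{0, j}. p i * r ^ i)"
    using \<open>j \<noteq> 0\<close> by simp
  also have "\<dots> \<le> (\<Sum>i<Suc j. p i * r ^ i)"
    using terms_nonneg by (intro sum_mono2) auto
  also have "\<dots> \<le> (\<Sum>i. p i * r ^ i)"
    using terms_nonneg by (intro sum_le_suminf summable) auto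
  finally show ?thesis .
qed

lemma norm_CPr_minus_geometric_sum_le:
  assumes nonneg: "\<And>j. 0 \<le> p j" and summable: "summable (\<lambda>j. p j * r ^ j)"
    and "p 0 < r" and "(\<Sum>j. p j * r ^ j) < r" and "h < n" and "j < n"
  defines "\<theta> \<equiv> ((\<Sum>j. p j * r ^ j) - p 0) / (r - p 0)"
  shows "cmod (CPr p r n $$ (h, j)
      - (\<Sum>m<k. inverse ((of_real r * xi n (h + 1) - of_real (p 0)) ^ (m + 1))
          * (pser p (of_real r * xi n (j + 1)) - of_real (p 0)) ^ m))
    \<le> \<theta> ^ k / ((1 - \<theta>) * (r - p 0))"
proof -
  define a where "a = complex_of_real r * xi n (h + 1) - of_real (p 0)"
  define b where "b = pser p (complex_of_real r * xi n (j + 1)) - of_real (p 0)"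
  have "0 \<le> r"
    using nonneg[of 0] \<open>p 0 < r\<close> by simp
  have a: "r - p 0 \<le> cmod a"
    using norm_triangle_ineq2[of "of_real r * xi n (h + 1)" "of_real (p 0)"] nonneg[of 0] \<open>0 \<le> r\<close>
    by (simp add: a_def norm_mult)
  have b: "cmod b \<le> \<theta> * (r - p 0)"
    using norm_pser_minus_constant_le[OF nonneg summable, of "of_real r * xi n (j + 1)"] \<open>0 \<le> r\<close> \<open>p 0 < r\<close>
    by (simp add: b_def \<theta>_def norm_mult)
  then have "0 \<le> \<theta> * (r - p 0)"
    by (rule order_trans[OF norm_ge_zero])
  then have "0 \<le> \<theta>"
    using \<open>p 0 < r\<close> by (simp add: zero_le_mult_iff)
  have "cmod b \<le> \<theta> * cmod a"
    using b mult_left_mono[OF a \<open>0 \<le> \<theta>\<close>] by (rule order_trans)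
  moreover have "\<theta> < 1"
    using assms(3,4) by (simp add: \<theta>_def)
  moreover have "CPr p r n $$ (h, j) = inverse (a - b)"
    using assms(5,6) by (simp add: CPr_def a_def b_def)
  ultimately show ?thesis
    using norm_inverse_diff_minus_geometric_sum_le[of b \<theta> a "r - p 0" k] a \<open>p 0 < r\<close>
    by (simp add: a_def b_def)
qed

lemma sigma_CPr_le:
  assumes nonneg: "\<And>j. 0 \<le> p j" and summable: "summable (\<lambda>j. p j * r ^ j)"
    and "p 0 < r" and "(\<Sum>j. p j * r ^ j) < r" and "k < n"
  defines "\<theta> \<equiv> ((\<Sum>j. p j * r ^ j) - p 0) / (r - p 0)"
  shows "sigma (CPr p r n) (k + 1) \<le> \<theta> ^ k * real n / ((1 - \<theta>) * (r - p 0))"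
proof -
  have "sigma (CPr p r n) (k + 1) \<le> real n * (\<theta> ^ k / ((1 - \<theta>) * (r - p 0)))"
  proof (rule sigma_le_of_entrywise_low_rank_approx)
    show "CPr p r n \<in> carrier_mat n n"
      by (simp add: CPr_def)
    show "cmod (CPr p r n $$ (h, j) - (\<Sum>m<k.
          inverse ((of_real r * xi n (h + 1) - of_real (p 0)) ^ (m + 1))
          * (pser p (of_real r * xi n (j + 1)) - of_real (p 0)) ^ m))
        \<le> \<theta> ^ k / ((1 - \<theta>) * (r - p 0))" if "h < n" "j < n" for h j
      unfolding \<theta>_def using nonneg summable assms(3,4) that by (rule norm_CPr_minus_geometric_sum_le)
  qed fact
  then show ?thesis
    by (simp add: mult.commute)
qed

theorem lemma3p4:
  fixes p :: "nat \<Rightarrow> real" and r :: real and n :: nat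
  assumes nonneg: "\<And>j. p j \<ge> 0"
    and P1: "summable p" "(\<Sum>j. p j) = 1"
    and dP1: "summable (\<lambda>j. real j * p j)"
        "(\<Sum>j. real j * p j) > 0" "(\<Sum>j. real j * p j) < 1"
    and r1: "r > 1"
    and Pr_fin: "summable (\<lambda>j. p j * r ^ j)"
    and Pr: "r > (\<Sum>j. p j * r ^ j)"
  shows "let \<theta> = ((\<Sum>j. p j * r ^ j) - p 0) / (r - p 0) in
           0 < \<theta> \<and> \<theta> < 1 \<and>
           (\<forall>k\<in>{1..n-1}. sigma (CPr p r n) (k + 1)
               \<le> \<theta> ^ k * real n / ((1 - \<theta>) * (r - p 0)))"
proof -
  define \<theta> where "\<theta> = ((\<Sum>j. p j * r ^ j) - p 0) / (r - p 0)"
  have "p 0 \<le> 1"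
    using sum_le_suminf[OF P1(1), of "{..<1}"] nonneg P1(2) by simp
  then have "p 0 < r"
    using r1 by simp
  moreover have "p 0 < (\<Sum>j. p j * r ^ j)"
    using r1 by (intro constant_coeff_less_pser_real nonneg Pr_fin dP1(2)) simp
  ultimately have "0 < \<theta>" and "\<theta> < 1"
    using Pr by (simp_all add: \<theta>_def)
  moreover have "sigma (CPr p r n) (k + 1) \<le> \<theta> ^ k * real n / ((1 - \<theta>) * (r - p 0))"
    if "k \<in> {1..n - 1}" for k
    unfolding \<theta>_def using nonneg Pr_fin \<open>p 0 < r\<close> Pr by (rule sigma_CPr_le) (use that in auto)
  ultimately show ?thesis
    unfolding Let_def \<theta>_def[symmetric] by blast
qed

end
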